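(* Let $\gamma:[0,1]\to M_{m,n}(\mathbb{C})$ be a smooth curve with $\gamma(0)=C$ and $\gamma(1)=D$. Then $$ s(D-C)\prec_w \int_0^1 s(\gamma'(t))\,dt. $$
   Context: For a complex matrix $Z$, $s(Z)$ denotes the vector of its singular values counting multiplicities arranged non-increasingly; the integral of a vector-valued function is taken entrywise. For real vectors $x,y$ of equal length $\ell$, $x\prec_w y$ means $\sum_{i=1}^r x_i^\downarrow\le\sum_{i=1}^r y_i^\downarrow$ for $r=1,\dots,\ell$, with $x^\downarrow$ the non-increasing rearrangement. *)

theory Defs
  imports "HOL-Analysis.Analysis" "HOL-Computational_Algebra.Polynomial" "HOL-Library.Multiset"
begin

definition cadjoint :: "complex^'n^'m \<Rightarrow> complex^'m^'n" where
  "cadjoint Z = (\<chi> i j. cnj (Z $ j $ i))"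

definition cpoly :: "complex^'n^'n \<Rightarrow> complex poly" where
  "cpoly A = det (\<chi> i j. (if i = j then [:0, 1:] else 0) - [:A $ i $ j:])"

definition eig_mset :: "complex^'n^'n \<Rightarrow> complex multiset" where
  "eig_mset A = (\<Sum>x\<in>{x. poly (cpoly A) x = 0}. replicate_mset (order x (cpoly A)) x)"

definition singvals :: "complex^'n^'m \<Rightarrow> real list" where
  "singvals Z = take (min CARD('m) CARD('n))
     (rev (sorted_list_of_multiset (image_mset (\<lambda>z. sqrt (Re z)) (eig_mset (cadjoint Z ** Z)))))"

definition weak_majorized :: "real list \<Rightarrow> real list \<Rightarrow> bool" (infix "\<prec>\<^sub>w" 50) where
  "x \<prec>\<^sub>w y \<longleftrightarrow> length x = length y \<and>
     (\<forall>r\<in>{1..length x}. sum_list (take r (rev (sort x))) \<le> sum_list (take r (rev (sort y))))"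

definition smooth_on_01 :: "(real \<Rightarrow> 'a::real_normed_vector) \<Rightarrow> bool" where
  "smooth_on_01 g \<longleftrightarrow> (\<exists>f. f 0 = g \<and>
     (\<forall>k. \<forall>t\<in>{0..1}. (f k has_vector_derivative f (Suc k) t) (at t within {0..1})))"

end

theory Submission
  imports Defs
begin

(*
  Write ky_fan r Z for the sum of the r largest singular values of Z. Ky Fan's maximum
  principle says that ky_fan r Z is the maximum of Re (sum_{j<r} <u_j, Z v_j>) over families
  u, v of r pairwise orthogonal vectors of norm at most 1. Fix families attaining it at D - C.
  The functional Z |-> Re (sum_j <u_j, Z v_j>) is real-linear, so by the fundamental theorem
  of calculus its value at D - C is the integral of its values at gamma'(t), each of which is
  at most ky_fan r (gamma' t). Both vectors being non-increasing, these inequalities for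
  r = 1, ..., min(m, n) are the weak majorization.

  The maximum principle rests on the singular value decomposition, which comes from the
  spectral theorem for Z* Z (proved by maximizing the Rayleigh quotient on successive
  orthogonal complements) and the factorization of its characteristic polynomial. Ky Fan norms
  are Lipschitz, so the singular values are continuous along gamma' and the integrals exist.
*)

lemma sum_eq_single:
  assumes "finite A" "a \<in> A" "\<And>b. b \<in> A \<Longrightarrow> b \<noteq> a \<Longrightarrow> f b = 0"
  shows "sum f A = f a"
  using assms by (simp add: sum.remove sum.neutral)

section \<open>The complex inner product\<close>

definition cinner :: "complex^'n \<Rightarrow> complex^'n \<Rightarrow> complex" where
  "cinner u v = (\<Sum>i\<in>UNIV. cnj (u$i) * v$i)"

lemma cinner_add_right: "cinner u (v + w) = cinner u v + cinner u w"
  by (simp add: cinner_def distrib_left sum.distrib)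

lemma cinner_add_left: "cinner (u + v) w = cinner u w + cinner v w"
  by (simp add: cinner_def distrib_right sum.distrib)

lemma cinner_diff_right: "cinner u (v - w) = cinner u v - cinner u w"
  by (simp add: cinner_def right_diff_distrib sum_subtractf)

lemma cinner_diff_left: "cinner (u - v) w = cinner u w - cinner v w"
  by (simp add: cinner_def left_diff_distrib sum_subtractf)

lemma cinner_scale_right: "cinner u (c *s v) = c * cinner u v"
  by (simp add: cinner_def sum_distrib_left algebra_simps)

lemma cinner_scale_left: "cinner (c *s u) v = cnj c * cinner u v"
  by (simp add: cinner_def sum_distrib_left algebra_simps)

lemma cinner_scaleR_right: "cinner u (c *\<^sub>R v) = of_real c * cinner u v"
  unfolding cinner_def by (simp add: sum_distrib_left) (simp add: scaleR_conv_of_real mult_ac)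

lemma cinner_scaleR_left: "cinner (c *\<^sub>R u) v = of_real c * cinner u v"
  unfolding cinner_def by (simp add: sum_distrib_left) (simp add: scaleR_conv_of_real mult_ac)

lemma cinner_zero_right [simp]: "cinner u 0 = 0"
  by (simp add: cinner_def)

lemma cinner_zero_left [simp]: "cinner 0 u = 0"
  by (simp add: cinner_def)

lemma cinner_sum_right: "cinner u (\<Sum>a\<in>A. f a) = (\<Sum>a\<in>A. cinner u (f a))"
  by (induct A rule: infinite_finite_induct) (auto simp: cinner_add_right)

lemma cinner_sum_left: "cinner (\<Sum>a\<in>A. f a) u = (\<Sum>a\<in>A. cinner (f a) u)"
  by (induct A rule: infinite_finite_induct) (auto simp: cinner_add_left)

lemma cinner_commute: "cinner v u = cnj (cinner u v)"
  by (simp add: cinner_def cnj_sum mult.commute)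

lemma norm_vec_power2: "(norm (x::complex^'n))\<^sup>2 = (\<Sum>i\<in>UNIV. (cmod (x$i))\<^sup>2)"
  by (simp add: norm_vec_def L2_set_def sum_nonneg)

lemma cinner_self: "cinner x x = of_real ((norm x)\<^sup>2)"
  unfolding norm_vec_power2 cinner_def of_real_sum
  by (rule sum.cong) (auto simp del: of_real_power simp: complex_norm_square mult.commute)

lemma cinner_axis_right: "cinner x (axis i 1) = cnj (x$i)"
  by (simp add: cinner_def axis_def if_distrib cong: if_cong)

lemma norm_cinner_le: "cmod (cinner u v) \<le> norm u * norm v"
proof -
  have "cmod (cinner u v) \<le> (\<Sum>i\<in>UNIV. \<bar>cmod (u$i)\<bar> * \<bar>cmod (v$i)\<bar>)"
    unfolding cinner_def by (rule order_trans[OF norm_sum]) (simp add: norm_mult)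
  also have "\<dots> \<le> L2_set (\<lambda>i. cmod (u$i)) UNIV * L2_set (\<lambda>i. cmod (v$i)) UNIV"
    by (rule L2_set_mult_ineq)
  finally show ?thesis
    by (simp add: norm_vec_def)
qed

lemma norm_matrix_vector_mult_le: "norm ((X::complex^'n^'m) *v w) \<le> norm X * norm w"
proof -
  have row: "norm ((X *v w) $ i) \<le> norm w * norm (X $ i)" for i
  proof -
    have "norm ((X *v w) $ i) \<le> (\<Sum>j\<in>UNIV. \<bar>cmod (X$i$j)\<bar> * \<bar>cmod (w$j)\<bar>)"
      unfolding matrix_vector_mult_def by (simp, rule order_trans[OF norm_sum]) (simp add: norm_mult)
    also have "\<dots> \<le> L2_set (\<lambda>j. cmod (X$i$j)) UNIV * L2_set (\<lambda>j. cmod (w$j)) UNIV"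
      by (rule L2_set_mult_ineq)
    finally show ?thesis
      by (simp add: norm_vec_def mult.commute)
  qed
  have "L2_set (\<lambda>i. norm ((X *v w) $ i)) UNIV \<le> L2_set (\<lambda>i. norm w * norm (X $ i)) UNIV"
    by (rule L2_set_mono) (use row in auto)
  also have "\<dots> = norm w * norm X"
    by (simp add: norm_vec_def L2_set_right_distrib)
  finally show ?thesis
    by (simp add: norm_vec_def mult.commute)
qed

lemma cinner_matrix_vector_mult: "cinner u (A *v v) = cinner (cadjoint A *v u) v"
proof -
  have "cinner u (A *v v) = (\<Sum>i\<in>UNIV. \<Sum>j\<in>UNIV. cnj (u$i) * A$i$j * v$j)"
    by (simp add: cinner_def matrix_vector_mult_def sum_distrib_left mult_ac)
  also have "\<dots> = (\<Sum>j\<in>UNIV. \<Sum>i\<in>UNIV. cnj (u$i) * A$i$j * v$j)"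
    by (rule sum.swap)
  also have "\<dots> = cinner (cadjoint A *v u) v"
    by (simp add: cinner_def matrix_vector_mult_def cadjoint_def sum_distrib_left cnj_sum mult_ac)
  finally show ?thesis .
qed

lemma cadjoint_matrix_mult: "cadjoint (A ** B) = cadjoint B ** cadjoint A"
  unfolding cadjoint_def matrix_matrix_mult_def
  by (simp add: vec_eq_iff cnj_sum mult.commute)

lemma cadjoint_cadjoint [simp]: "cadjoint (cadjoint A) = A"
  by (simp add: cadjoint_def vec_eq_iff)

lemma scaleR_matrix_vector_mult_complex: "(c *\<^sub>R A) *v w = c *\<^sub>R ((A::complex^'n^'m) *v w)"
  by (simp add: vec_eq_iff matrix_vector_mult_def sum_distrib_left scaleR_conv_of_real[where 'a=complex] mult_ac)

lemma matrix_vector_mult_scaleR_complex: "(A::complex^'n^'m) *v (c *\<^sub>R v) = c *\<^sub>R (A *v v)"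
  by (simp add: vec_eq_iff matrix_vector_mult_def sum_distrib_left scaleR_conv_of_real[where 'a=complex] mult_ac)

section \<open>Orthonormal families\<close>

definition orthonormal :: "nat \<Rightarrow> (nat \<Rightarrow> complex^'n) \<Rightarrow> bool" where
  "orthonormal k F \<longleftrightarrow> (\<forall>a<k. \<forall>b<k. cinner (F a) (F b) = (if a = b then 1 else 0))"

text \<open>Norms below 1 are allowed so that the images \<open>Z v\<^sub>i / \<sigma>\<^sub>i\<close> of right singular vectors form
  such a family even when some \<open>\<sigma>\<^sub>i\<close> vanish (where the division yields 0).\<close>
definition suborthonormal :: "nat \<Rightarrow> (nat \<Rightarrow> complex^'n) \<Rightarrow> bool" where
  "suborthonormal k F \<longleftrightarrow>
     (\<forall>a<k. \<forall>b<k. a \<noteq> b \<longrightarrow> cinner (F a) (F b) = 0) \<and> (\<forall>a<k. norm (F a) \<le> 1)"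

lemma orthonormal_norm:
  assumes "orthonormal k F" "a < k"
  shows "norm (F a) = 1"
proof -
  have "of_real ((norm (F a))\<^sup>2) = (1::complex)"
    using assms unfolding orthonormal_def cinner_self[symmetric] by auto
  then have "(norm (F a))\<^sup>2 = 1"
    by (simp only: of_real_eq_1_iff)
  then show ?thesis
    using norm_ge_zero[of "F a"] by (simp add: power2_eq_1_iff)
qed

lemma orthonormal_imp_suborthonormal: "orthonormal k F \<Longrightarrow> suborthonormal k F"
  using orthonormal_norm[of k F] unfolding orthonormal_def suborthonormal_def by auto

lemma suborthonormal_mono: "suborthonormal k F \<Longrightarrow> j \<le> k \<Longrightarrow> suborthonormal j F"
  unfolding suborthonormal_def by auto

lemma cinner_suborthonormal_combination:
  assumes "suborthonormal k F"
  shows "cinner (\<Sum>a<k. c a *s F a) (\<Sum>b<k. c b *s F b) =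
    (\<Sum>a<k. of_real ((cmod (c a))\<^sup>2 * (norm (F a))\<^sup>2))"
proof -
  have "cinner (\<Sum>a<k. c a *s F a) (\<Sum>b<k. c b *s F b) =
      (\<Sum>a<k. cnj (c a) * (\<Sum>b<k. c b * cinner (F a) (F b)))"
    by (simp only: cinner_sum_left cinner_scale_left)
      (simp add: cinner_sum_right cinner_scale_right sum_distrib_left)
  also have "\<dots> = (\<Sum>a<k. cnj (c a) * (c a * cinner (F a) (F a)))"
  proof (rule sum.cong[OF refl])
    fix a assume "a \<in> {..<k}"
    then have "(\<Sum>b<k. c b * cinner (F a) (F b)) = c a * cinner (F a) (F a)"
      using assms by (intro sum_eq_single) (auto simp: suborthonormal_def)
    then show "cnj (c a) * (\<Sum>b<k. c b * cinner (F a) (F b)) = cnj (c a) * (c a * cinner (F a) (F a))"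
      by simp
  qed
  also have "\<dots> = (\<Sum>a<k. of_real ((cmod (c a))\<^sup>2 * (norm (F a))\<^sup>2))"
    by (rule sum.cong[OF refl])
      (simp add: cinner_self complex_norm_square[symmetric] mult_ac del: of_real_power)
  finally show ?thesis .
qed

lemma bessel_inequality:
  assumes "suborthonormal k F"
  shows "(\<Sum>a<k. (cmod (cinner (F a) x))\<^sup>2) \<le> (norm x)\<^sup>2"
proof -
  define c where "c a = cinner (F a) x" for a
  define w where "w = x - (\<Sum>a<k. c a *s F a)"
  have xF: "cinner x (F a) = cnj (c a)" for a
    by (simp add: c_def cinner_commute[of x])
  have "cinner w w = cinner x x - (\<Sum>a<k. c a * cnj (c a)) - (\<Sum>a<k. cnj (c a) * c a)
      + cinner (\<Sum>a<k. c a *s F a) (\<Sum>b<k. c b *s F b)"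
    unfolding w_def cinner_diff_left cinner_diff_right
    by (simp add: cinner_sum_left cinner_sum_right cinner_scale_left cinner_scale_right xF c_def[symmetric])
  also have "\<dots> = of_real ((norm x)\<^sup>2 - 2 * (\<Sum>a<k. (cmod (c a))\<^sup>2)
      + (\<Sum>a<k. (cmod (c a))\<^sup>2 * (norm (F a))\<^sup>2))"
    unfolding cinner_suborthonormal_combination[OF assms]
    by (simp add: cinner_self complex_norm_square[symmetric] mult.commute of_real_sum)
  finally have "(norm w)\<^sup>2 = (norm x)\<^sup>2 - 2 * (\<Sum>a<k. (cmod (c a))\<^sup>2)
      + (\<Sum>a<k. (cmod (c a))\<^sup>2 * (norm (F a))\<^sup>2)"
    by (simp only: cinner_self of_real_eq_iff)
  moreover have "(\<Sum>a<k. (cmod (c a))\<^sup>2 * (norm (F a))\<^sup>2) \<le> (\<Sum>a<k. (cmod (c a))\<^sup>2)"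
  proof (rule sum_mono)
    fix a assume "a \<in> {..<k}"
    then have "(norm (F a))\<^sup>2 \<le> 1"
      using assms by (simp add: suborthonormal_def power_le_one)
    then show "(cmod (c a))\<^sup>2 * (norm (F a))\<^sup>2 \<le> (cmod (c a))\<^sup>2"
      by (simp add: mult_left_le)
  qed
  ultimately show ?thesis
    using zero_le_power2[of "norm w"] unfolding c_def by linarith
qed

lemma orthonormal_cinner_residual:
  assumes "orthonormal k F" "b < k"
  shows "cinner (F b) (x - (\<Sum>a<k. cinner (F a) x *s F a)) = 0"
proof -
  have "cinner (F b) (\<Sum>a<k. cinner (F a) x *s F a) = (\<Sum>a<k. cinner (F a) x * cinner (F b) (F a))"
    by (simp add: cinner_sum_right cinner_scale_right)
  also have "\<dots> = cinner (F b) x"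
    using assms by (subst sum_eq_single[of _ b]) (auto simp: orthonormal_def)
  finally show ?thesis
    by (simp add: cinner_diff_right)
qed

lemma orthonormal_sum_coordinates:
  assumes "orthonormal k (F :: nat \<Rightarrow> complex^'n)"
  shows "(\<Sum>i\<in>UNIV. \<Sum>a<k. (cmod (cinner (F a) (axis i 1)))\<^sup>2) = k"
proof -
  have "(\<Sum>i\<in>UNIV. \<Sum>a<k. (cmod (cinner (F a) (axis i 1)))\<^sup>2) = (\<Sum>a<k. (norm (F a))\<^sup>2)"
    by (subst sum.swap) (simp add: cinner_axis_right norm_vec_power2)
  also have "\<dots> = k"
    using orthonormal_norm[OF assms] by simp
  finally show ?thesis .
qed

lemma norm_axis_complex: "norm (axis i (1::complex) :: complex^'n) = 1"
proof -
  have "(norm (axis i (1::complex) :: complex^'n))\<^sup>2 = (\<Sum>j\<in>UNIV. if j = i then 1 else 0)"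
    unfolding norm_vec_power2 by (rule sum.cong) (auto simp: axis_def)
  then have "(norm (axis i (1::complex) :: complex^'n))\<^sup>2 = 1"
    by simp
  then show ?thesis
    by (simp add: power2_eq_1_iff)
qed

lemma orthonormal_card_le:
  assumes "orthonormal k (F :: nat \<Rightarrow> complex^'n)"
  shows "k \<le> CARD('n)"
proof -
  have "real k = (\<Sum>i\<in>UNIV. \<Sum>a<k. (cmod (cinner (F a) (axis i 1)))\<^sup>2)"
    using orthonormal_sum_coordinates[OF assms] by simp
  also have "\<dots> \<le> (\<Sum>i\<in>(UNIV::'n set). 1)"
  proof (rule sum_mono)
    fix i :: 'n
    show "(\<Sum>a<k. (cmod (cinner (F a) (axis i 1)))\<^sup>2) \<le> 1"
      using bessel_inequality[OF orthonormal_imp_suborthonormal[OF assms], of "axis i 1"]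
      by (simp add: norm_axis_complex)
  qed
  finally show ?thesis
    by simp
qed

lemma orthonormal_extend:
  assumes F: "orthonormal k (F :: nat \<Rightarrow> complex^'n)" and k: "k < CARD('n)"
  obtains w where "w \<noteq> 0" "\<forall>a<k. cinner (F a) w = 0"
proof -
  have "\<exists>i. (\<Sum>a<k. (cmod (cinner (F a) (axis i 1)))\<^sup>2) < 1"
  proof (rule ccontr)
    assume "\<not> ?thesis"
    then have "(\<Sum>i\<in>(UNIV::'n set). 1) \<le> (\<Sum>i\<in>UNIV. \<Sum>a<k. (cmod (cinner (F a) (axis i 1)))\<^sup>2)"
      by (intro sum_mono) (simp add: not_less)
    then show False
      using k orthonormal_sum_coordinates[OF F] by simp
  qed
  then obtain i where i: "(\<Sum>a<k. (cmod (cinner (F a) (axis i 1)))\<^sup>2) < 1"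
    by blast
  define c where "c a = cinner (F a) (axis i 1)" for a
  define w where "w = axis i 1 - (\<Sum>a<k. c a *s F a)"
  have "w \<noteq> 0"
  proof
    assume "w = 0"
    then have "of_real ((norm (axis i (1::complex) :: complex^'n))\<^sup>2)
        = cinner (\<Sum>a<k. c a *s F a) (\<Sum>b<k. c b *s F b)"
      unfolding cinner_self[symmetric] w_def by simp
    also have "\<dots> = of_real (\<Sum>a<k. (cmod (c a))\<^sup>2)"
      using orthonormal_norm[OF F]
      by (simp add: cinner_suborthonormal_combination[OF orthonormal_imp_suborthonormal[OF F]] of_real_sum)
    finally show False
      using i by (simp only: of_real_eq_iff norm_axis_complex c_def) simp
  qed
  moreover have "\<forall>a<k. cinner (F a) w = 0"
    using orthonormal_cinner_residual[OF F] by (simp add: w_def c_def)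
  ultimately show ?thesis
    using that by blast
qed

lemma orthonormal_fun_upd:
  assumes F: "orthonormal k F" and x: "norm x = 1" "\<forall>a<k. cinner (F a) x = 0"
  shows "orthonormal (Suc k) (F(k := x))"
  unfolding orthonormal_def
proof (intro allI impI)
  fix a b assume "a < Suc k" "b < Suc k"
  moreover have "cinner x x = 1"
    using x by (simp add: cinner_self)
  moreover have "cinner x (F a) = 0" if "a < k" for a
    using x that cinner_commute[of x "F a"] by simp
  ultimately show "cinner ((F(k := x)) a) ((F(k := x)) b) = (if a = b then 1 else 0)"
    using F x by (auto simp: orthonormal_def less_Suc_eq)
qed

lemma orthonormal_complete:
  assumes F: "orthonormal CARD('n) (F :: nat \<Rightarrow> complex^'n)"
    and w: "\<forall>a<CARD('n). cinner (F a) w = 0"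
  shows "w = 0"
proof (rule ccontr)
  assume "w \<noteq> 0"
  then have "orthonormal (Suc CARD('n)) (F(CARD('n) := (1 / norm w) *\<^sub>R w))"
    using w by (intro orthonormal_fun_upd[OF F]) (auto simp: cinner_scaleR_right)
  then show False
    using orthonormal_card_le by fastforce
qed

lemma orthonormal_expansion:
  assumes "orthonormal CARD('n) (F :: nat \<Rightarrow> complex^'n)"
  shows "x = (\<Sum>a<CARD('n). cinner (F a) x *s F a)"
  using orthonormal_complete[OF assms, of "x - (\<Sum>a<CARD('n). cinner (F a) x *s F a)"]
    orthonormal_cinner_residual[OF assms] by simp

section \<open>Spectral theorem for Hermitian matrices\<close>

definition rayleigh :: "complex^'n^'n \<Rightarrow> complex^'n \<Rightarrow> real" where
  "rayleigh H y = Re (cinner y (H *v y))"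

lemma hermitian_cinner_swap: "cadjoint H = H \<Longrightarrow> cinner u (H *v v) = cinner (H *v u) v"
  using cinner_matrix_vector_mult[of u H v] by simp

lemma hermitian_cinner_self:
  assumes "cadjoint H = H"
  shows "cinner y (H *v y) = of_real (rayleigh H y)"
proof -
  have "cinner y (H *v y) = cnj (cinner y (H *v y))"
    using hermitian_cinner_swap[OF assms, of y y] cinner_commute[of "H *v y" y] by simp
  then show ?thesis
    unfolding rayleigh_def by (simp add: complex_eq_iff)
qed

lemma rayleigh_scaleR: "rayleigh H (c *\<^sub>R y) = c\<^sup>2 * rayleigh H y"
  by (simp add: rayleigh_def matrix_vector_mult_scaleR_complex cinner_scaleR_left cinner_scaleR_right
      power2_eq_square)

lemma continuous_on_cinner_right: "continuous_on S (\<lambda>y::complex^'n. cinner a y)"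
  unfolding cinner_def by (intro continuous_intros)

lemma continuous_on_rayleigh: "continuous_on S (rayleigh H)"
  unfolding rayleigh_def cinner_def matrix_vector_mult_def by (simp, intro continuous_intros)

lemma rayleigh_maximizer_exists:
  fixes H :: "complex^'n^'n"
  assumes F: "orthonormal k F" and k: "k < CARD('n)"
  obtains x where "norm x = 1" "\<forall>a<k. cinner (F a) x = 0"
    "\<forall>y. (\<forall>a<k. cinner (F a) y = 0) \<longrightarrow> rayleigh H y \<le> rayleigh H x * (norm y)\<^sup>2"
proof -
  define K where "K = sphere (0::complex^'n) 1 \<inter> (\<Inter>a\<in>{..<k}. {y. cinner (F a) y = 0})"
  have "compact K"
    unfolding K_def by (intro compact_Int_closed compact_sphere closed_INT ballI closed_Collect_eq
        continuous_intros continuous_on_cinner_right)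
  moreover obtain w where w: "w \<noteq> 0" "\<forall>a<k. cinner (F a) w = 0"
    using orthonormal_extend[OF F k] by blast
  then have "(1 / norm w) *\<^sub>R w \<in> K"
    unfolding K_def by (simp add: cinner_scaleR_right)
  ultimately obtain x where x: "x \<in> K" and x_max: "\<forall>y\<in>K. rayleigh H y \<le> rayleigh H x"
    using continuous_attains_sup[OF _ _ continuous_on_rayleigh] by blast
  have "rayleigh H y \<le> rayleigh H x * (norm y)\<^sup>2" if y: "\<forall>a<k. cinner (F a) y = 0" for y
  proof (cases "y = 0")
    case False
    then have "(1 / norm y) *\<^sub>R y \<in> K"
      using y unfolding K_def by (simp add: cinner_scaleR_right)
    then have "rayleigh H y / (norm y)\<^sup>2 \<le> rayleigh H x"
      using x_max by (force simp: rayleigh_scaleR power_divide)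
    then show ?thesis
      using False by (simp add: divide_le_eq mult.commute)
  qed (simp add: rayleigh_def)
  then show ?thesis
    using that x unfolding K_def by auto
qed

lemma nonpos_if_linear_le_quadratic:
  fixes a c :: real
  assumes "\<And>t. t > 0 \<Longrightarrow> t * a \<le> t * t * c"
  shows "a \<le> 0"
proof (rule ccontr)
  assume "\<not> a \<le> 0"
  define t where "t = a / (\<bar>c\<bar> + 1)"
  have t: "t > 0"
    using \<open>\<not> a \<le> 0\<close> by (simp add: t_def add_pos_nonneg)
  then have "a \<le> t * c"
    using assms[OF t] by (simp add: mult.assoc)
  also have "\<dots> \<le> t * \<bar>c\<bar>"
    using t by (simp add: mult_left_mono)
  also have "\<dots> = a * (\<bar>c\<bar> / (\<bar>c\<bar> + 1))"
    by (simp add: t_def)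
  also have "\<dots> < a * 1"
    using \<open>\<not> a \<le> 0\<close> by (intro mult_strict_left_mono) auto
  finally show False
    by simp
qed

lemma rayleigh_add_scaleR:
  assumes "cadjoint H = H"
  shows "rayleigh H (x + t *\<^sub>R v) =
    rayleigh H x + 2 * t * Re (cinner x (H *v v)) + t\<^sup>2 * rayleigh H v"
proof -
  have "cinner v (H *v x) = cnj (cinner x (H *v v))"
    using hermitian_cinner_swap[OF assms, of v x] cinner_commute[of "H *v v" x] by simp
  moreover have "cinner (x + t *\<^sub>R v) (H *v (x + t *\<^sub>R v)) = cinner x (H *v x)
      + of_real t * cinner x (H *v v) + of_real t * cinner v (H *v x) + of_real t * of_real t * cinner v (H *v v)"
    by (simp add: matrix_vector_right_distrib matrix_vector_mult_scaleR_complex cinner_add_left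
        cinner_add_right cinner_scaleR_left cinner_scaleR_right algebra_simps)
  ultimately show ?thesis
    by (simp add: rayleigh_def power2_eq_square)
qed

lemma norm_add_scaleR_power2:
  assumes "cinner x v = 0"
  shows "(norm (x + t *\<^sub>R v))\<^sup>2 = (norm x)\<^sup>2 + t\<^sup>2 * (norm v)\<^sup>2"
proof -
  have "cinner (x + t *\<^sub>R v) (x + t *\<^sub>R v) =
      cinner x x + of_real t * cinner x v + of_real t * cinner v x + of_real t * of_real t * cinner v v"
    by (simp add: cinner_add_left cinner_add_right cinner_scaleR_left cinner_scaleR_right algebra_simps)
  then have "of_real ((norm (x + t *\<^sub>R v))\<^sup>2) = (of_real ((norm x)\<^sup>2 + t\<^sup>2 * (norm v)\<^sup>2) :: complex)"
    using assms cinner_commute[of v x] by (simp add: cinner_self power2_eq_square)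
  then show ?thesis
    by (simp only: of_real_eq_iff)
qed

text \<open>If \<open>H x \<noteq> \<mu> x\<close>, moving \<open>x\<close> along \<open>v = H x - \<mu> x\<close> raises the Rayleigh quotient
  to first order.\<close>
lemma rayleigh_maximizer_is_eigenvector:
  fixes H :: "complex^'n^'n"
  assumes herm: "cadjoint H = H"
    and eig: "\<forall>a<k. H *v F a = of_real (lam a) *s F a"
    and x: "norm x = 1" "\<forall>a<k. cinner (F a) x = 0"
    and x_max: "\<forall>y. (\<forall>a<k. cinner (F a) y = 0) \<longrightarrow> rayleigh H y \<le> rayleigh H x * (norm y)\<^sup>2"
  shows "H *v x = of_real (rayleigh H x) *s x"
proof -
  define \<mu> where "\<mu> = rayleigh H x"
  define v where "v = H *v x - of_real \<mu> *s x"
  have Hx: "H *v x = v + of_real \<mu> *s x"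
    unfolding v_def by simp
  have v_orth: "\<forall>a<k. cinner (F a) v = 0"
  proof (intro allI impI)
    fix a assume a: "a < k"
    have "cinner (F a) (H *v x) = cinner (H *v F a) x"
      by (rule hermitian_cinner_swap[OF herm])
    then show "cinner (F a) v = 0"
      using eig x a by (simp add: v_def cinner_diff_right cinner_scale_right cinner_scale_left)
  qed
  have xv: "cinner x v = 0"
    using x hermitian_cinner_self[OF herm, of x]
    by (simp add: v_def \<mu>_def cinner_diff_right cinner_scale_right cinner_self)
  have xHv: "cinner x (H *v v) = of_real ((norm v)\<^sup>2)"
    using hermitian_cinner_swap[OF herm, of x v] Hx xv
    by (simp add: cinner_add_left cinner_scale_left cinner_self)
  have "t * (2 * (norm v)\<^sup>2) \<le> t * t * (\<mu> * (norm v)\<^sup>2 - rayleigh H v)" if "t > 0" for t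
  proof -
    have "\<forall>a<k. cinner (F a) (x + t *\<^sub>R v) = 0"
      using x v_orth by (simp add: cinner_add_right cinner_scaleR_right)
    then have "rayleigh H (x + t *\<^sub>R v) \<le> \<mu> * (norm (x + t *\<^sub>R v))\<^sup>2"
      using x_max unfolding \<mu>_def by blast
    then show ?thesis
      using x unfolding rayleigh_add_scaleR[OF herm] norm_add_scaleR_power2[OF xv]
      by (simp add: xHv \<mu>_def[symmetric] algebra_simps power2_eq_square)
  qed
  then have "2 * (norm v)\<^sup>2 \<le> 0"
    by (rule nonpos_if_linear_le_quadratic)
  then have "v = 0"
    by simp
  then show ?thesis
    using Hx unfolding \<mu>_def by simp
qed

text \<open>The last clause, a bound for the Rayleigh quotient on the orthogonal complement, is the
  invariant that keeps the next eigenvalue found below the previous ones.\<close>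
lemma hermitian_sorted_eigenvectors_upto:
  fixes H :: "complex^'n^'n"
  assumes herm: "cadjoint H = H"
  shows "k \<le> CARD('n) \<Longrightarrow> \<exists>F lam. orthonormal k F \<and> (\<forall>a<k. H *v F a = of_real (lam a) *s F a) \<and>
     (\<forall>a b. a \<le> b \<longrightarrow> b < k \<longrightarrow> lam b \<le> lam a) \<and>
     (0 < k \<longrightarrow> (\<forall>y. (\<forall>a<k. cinner (F a) y = 0) \<longrightarrow> rayleigh H y \<le> lam (k - 1) * (norm y)\<^sup>2))"
proof (induction k)
  case 0
  show ?case
    by (rule exI[of _ "\<lambda>_. 0"], rule exI[of _ "\<lambda>_. 0"]) (simp add: orthonormal_def)
next
  case (Suc k)
  then obtain F lam where F: "orthonormal k F" and eig: "\<forall>a<k. H *v F a = of_real (lam a) *s F a"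
    and sorted: "\<forall>a b. a \<le> b \<longrightarrow> b < k \<longrightarrow> lam b \<le> lam a"
    and bound: "0 < k \<longrightarrow> (\<forall>y. (\<forall>a<k. cinner (F a) y = 0) \<longrightarrow> rayleigh H y \<le> lam (k - 1) * (norm y)\<^sup>2)"
    by auto
  obtain x where x: "norm x = 1" "\<forall>a<k. cinner (F a) x = 0"
    and x_max: "\<forall>y. (\<forall>a<k. cinner (F a) y = 0) \<longrightarrow> rayleigh H y \<le> rayleigh H x * (norm y)\<^sup>2"
    using rayleigh_maximizer_exists[OF F] Suc.prems by auto
  define F' where "F' = F(k := x)"
  define lam' where "lam' = lam(k := rayleigh H x)"
  have "orthonormal (Suc k) F'"
    unfolding F'_def by (rule orthonormal_fun_upd[OF F x])
  moreover have "\<forall>a<Suc k. H *v F' a = of_real (lam' a) *s F' a"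
    using eig rayleigh_maximizer_is_eigenvector[OF herm eig x x_max]
    by (auto simp: F'_def lam'_def less_Suc_eq)
  moreover have "lam' b \<le> lam' a" if "a \<le> b" "b < Suc k" for a b
  proof (cases "a < b \<and> b = k")
    case True
    then have "rayleigh H x \<le> lam (k - 1)"
      using bound x by auto
    also have "\<dots> \<le> lam a"
      using sorted True by auto
    finally show ?thesis
      using True by (simp add: lam'_def)
  next
    case False
    then show ?thesis
      using that sorted by (auto simp: lam'_def)
  qed
  moreover have "\<forall>y. (\<forall>a<Suc k. cinner (F' a) y = 0) \<longrightarrow> rayleigh H y \<le> lam' k * (norm y)\<^sup>2"
    using x_max by (auto simp: F'_def lam'_def)
  ultimately show ?case
    by auto
qed

lemma hermitian_sorted_eigenbasis:
  fixes H :: "complex^'n^'n"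
  assumes "cadjoint H = H"
  obtains F lam where "orthonormal CARD('n) F" "\<forall>a<CARD('n). H *v F a = of_real (lam a) *s F a"
    "\<forall>a b. a \<le> b \<longrightarrow> b < CARD('n) \<longrightarrow> lam b \<le> lam a"
  using hermitian_sorted_eigenvectors_upto[OF assms, of "CARD('n)"] by blast

section \<open>Singular values\<close>

lemma poly_det: "poly (det A) z = det (\<chi> i j. poly (A$i$j) z)"
  unfolding det_def by (simp add: poly_sum poly_prod poly_of_int)

lemma poly_cpoly: "poly (cpoly H) z = det (mat z - H)"
  unfolding cpoly_def poly_det by (rule arg_cong[where f=det]) (simp add: vec_eq_iff mat_def)

lemma mat_matrix_mult_commute: "mat z ** (Y::'a::comm_ring_1^'n^'n) = Y ** mat z"
proof -
  have "(if P then x else 0) * y = (if P then x * y else 0)" "y * (if P then x else 0) = (if P then y * x else 0)"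
    for P and x y :: 'a
    by simp_all
  then show ?thesis
    by (simp add: vec_eq_iff matrix_matrix_mult_def mat_def mult.commute)
qed

lemma matrix_diff_mult_distrib: "(A - B) ** (C::'a::comm_ring_1^'p^'n) = A ** C - B ** C"
  by (simp add: vec_eq_iff matrix_matrix_mult_def left_diff_distrib sum_subtractf)

lemma matrix_mult_diff_distrib: "(C::'a::comm_ring_1^'n^'m) ** (A - B) = C ** A - C ** B"
  by (simp add: vec_eq_iff matrix_matrix_mult_def right_diff_distrib sum_subtractf)

lemma det_unitary_conj:
  fixes Y A :: "complex^'n^'n"
  assumes "cadjoint Y ** Y = mat 1"
  shows "det (cadjoint Y ** A ** Y) = det A"
proof -
  have "det (cadjoint Y) * det Y = 1"
    using det_mul[of "cadjoint Y" Y] assms by (simp add: det_I)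
  then show ?thesis
    by (simp add: det_mul)
qed

lemma eigenbasis_diagonalizes:
  fixes H :: "complex^'n^'n"
  assumes F: "orthonormal CARD('n) F" and eig: "\<forall>a<CARD('n). H *v F a = of_real (lam a) *s F a"
    and ib: "bij_betw ib UNIV {..<CARD('n)}"
  defines "Y \<equiv> \<chi> r c. F (ib c) $ r"
  shows "cadjoint Y ** Y = mat 1"
    and "H ** Y = Y ** (\<chi> c d. if c = d then of_real (lam (ib c)) else 0)"
proof -
  have ib_less: "ib c < CARD('n)" for c
    using bij_betw_apply[OF ib] by simp
  have ib_eq_iff: "ib c = ib d \<longleftrightarrow> c = d" for c d
    using bij_betw_imp_inj_on[OF ib] by (simp add: inj_eq)
  have "(cadjoint Y ** Y) $ c $ d = cinner (F (ib c)) (F (ib d))" for c d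
    by (simp add: Y_def cadjoint_def matrix_matrix_mult_def cinner_def)
  then show "cadjoint Y ** Y = mat 1"
    using F ib_less ib_eq_iff by (simp add: vec_eq_iff mat_def orthonormal_def)
  define Dg where "Dg = (\<chi> c d. if c = d then of_real (lam (ib c)) else (0::complex))"
  have "(H ** Y) $ r $ c = (Y ** Dg) $ r $ c" for r c
  proof -
    have "(H ** Y) $ r $ c = (H *v F (ib c)) $ r"
      by (simp add: Y_def matrix_matrix_mult_def matrix_vector_mult_def)
    also have "\<dots> = Y $ r $ c * Dg $ c $ c"
      using eig ib_less by (simp add: Y_def Dg_def mult.commute)
    also have "\<dots> = (\<Sum>d\<in>UNIV. Y $ r $ d * Dg $ d $ c)"
      by (rule sum_eq_single[symmetric]) (auto simp: Dg_def)
    finally show ?thesis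
      by (simp add: matrix_matrix_mult_def)
  qed
  then show "H ** Y = Y ** (\<chi> c d. if c = d then of_real (lam (ib c)) else 0)"
    unfolding Dg_def by (simp add: vec_eq_iff)
qed

lemma det_eigenbasis:
  fixes H :: "complex^'n^'n"
  assumes "orthonormal CARD('n) F" "\<forall>a<CARD('n). H *v F a = of_real (lam a) *s F a"
  shows "det (mat z - H) = (\<Prod>a<CARD('n). z - of_real (lam a))"
proof -
  obtain ib :: "'n \<Rightarrow> nat" where ib: "bij_betw ib UNIV {..<CARD('n)}"
    using ex_bij_betw_finite_nat[of "UNIV :: 'n set"] by (auto simp: atLeast0LessThan)
  define Y :: "complex^'n^'n" where "Y = (\<chi> r c. F (ib c) $ r)"
  define Dg :: "complex^'n^'n" where "Dg = (\<chi> c d. if c = d then of_real (lam (ib c)) else 0)"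
  have unitary: "cadjoint Y ** Y = mat 1" and HY: "H ** Y = Y ** Dg"
    using eigenbasis_diagonalizes[OF assms ib] unfolding Y_def Dg_def by blast+
  have "cadjoint Y ** (mat z - H) ** Y = cadjoint Y ** ((mat z - H) ** Y)"
    by (simp add: matrix_mul_assoc)
  also have "\<dots> = cadjoint Y ** (Y ** mat z) - (cadjoint Y ** Y) ** Dg"
    by (simp add: matrix_diff_mult_distrib matrix_mult_diff_distrib mat_matrix_mult_commute HY
        matrix_mul_assoc Dg_def)
  also have "\<dots> = mat z - Dg"
    by (simp add: matrix_mul_assoc unitary)
  finally have "det (mat z - H) = det (mat z - Dg)"
    using det_unitary_conj[OF unitary] by metis
  also have "\<dots> = (\<Prod>c\<in>UNIV. z - of_real (lam (ib c)))"
    by (subst det_diagonal) (auto simp: Dg_def mat_def)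
  also have "\<dots> = (\<Prod>a<CARD('n). z - of_real (lam a))"
    by (rule prod.reindex_bij_betw[OF ib])
  finally show ?thesis .
qed

lemma cpoly_eigenbasis:
  fixes H :: "complex^'n^'n"
  assumes "orthonormal CARD('n) F" "\<forall>a<CARD('n). H *v F a = of_real (lam a) *s F a"
  shows "cpoly H = (\<Prod>a<CARD('n). [:- of_real (lam a), 1:])"
  by (subst poly_eq_poly_eq_iff[symmetric])
    (simp add: fun_eq_iff poly_cpoly det_eigenbasis[OF assms] poly_prod)

lemma order_linear_factor: "order x [:- c, 1:] = (if x = c then 1 else 0)"
  using order_power_n_n[of c 1] by (auto simp: order_0I)

lemma order_prod_linear_factors:
  fixes c :: "nat \<Rightarrow> 'a::idom"
  shows "order x (\<Prod>a<n. [:- c a, 1:]) = card {a\<in>{..<n}. c a = x}"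
proof (induction n)
  case 0
  then show ?case
    by (simp add: order_0I)
next
  case (Suc n)
  have "(\<Prod>a<Suc n. [:- c a, 1:]) \<noteq> 0"
    by (subst prod_zero_iff) auto
  then have "order x (\<Prod>a<Suc n. [:- c a, 1:]) = order x (\<Prod>a<n. [:- c a, 1:]) + order x [:- c n, 1:]"
    unfolding prod.lessThan_Suc by (rule order_mult)
  also have "\<dots> = card {a\<in>{..<n}. c a = x} + (if x = c n then 1 else 0)"
    by (simp add: Suc.IH order_linear_factor)
  also have "{a\<in>{..<Suc n}. c a = x} = {a\<in>{..<n}. c a = x} \<union> (if x = c n then {n} else {})"
    by (auto simp: less_Suc_eq)
  then have "card {a\<in>{..<n}. c a = x} + (if x = c n then 1 else 0) = card {a\<in>{..<Suc n}. c a = x}"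
    by (simp add: card_Un_disjoint)
  finally show ?case .
qed

lemma eig_mset_if_cpoly_eq_prod:
  fixes c :: "nat \<Rightarrow> complex"
  assumes "cpoly A = (\<Prod>a<n. [:- c a, 1:])"
  shows "eig_mset A = image_mset c (mset_set {..<n})"
proof (rule multiset_eqI)
  fix y
  have roots: "{x. poly (cpoly A) x = 0} = c ` {..<n}"
    by (auto simp: assms poly_prod prod_zero_iff)
  have "count (eig_mset A) y = (\<Sum>x\<in>c ` {..<n}. if x = y then order x (cpoly A) else 0)"
    by (simp add: eig_mset_def roots count_sum)
  also have "\<dots> = card {a\<in>{..<n}. c a = y}"
  proof (cases "y \<in> c ` {..<n}")
    case True
    then show ?thesis
      by (subst sum_eq_single[of _ y]) (auto simp: assms order_prod_linear_factors)
  next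
    case False
    then have "{a\<in>{..<n}. c a = y} = {}"
      by auto
    then show ?thesis
      using False by (auto intro!: sum.neutral)
  qed
  also have "\<dots> = count (image_mset c (mset_set {..<n})) y"
    by (simp add: count_image_mset_eq_card_vimage)
  finally show "count (eig_mset A) y = count (image_mset c (mset_set {..<n})) y" .
qed

lemma singvals_eq_sqrt_eigenvalues:
  fixes Z :: "complex^'n^'m"
  assumes F: "orthonormal CARD('n) F"
    and eig: "\<forall>a<CARD('n). (cadjoint Z ** Z) *v F a = of_real (lam a) *s F a"
    and sorted: "\<forall>a b. a \<le> b \<longrightarrow> b < CARD('n) \<longrightarrow> lam b \<le> lam a"
  shows "singvals Z = map (\<lambda>a. sqrt (lam a)) [0..<min CARD('m) CARD('n)]"
proof -
  define xs where "xs = map (\<lambda>a. sqrt (lam a)) [0..<CARD('n)]"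
  have "eig_mset (cadjoint Z ** Z) = image_mset (\<lambda>a. of_real (lam a)) (mset_set {..<CARD('n)})"
    by (rule eig_mset_if_cpoly_eq_prod[OF cpoly_eigenbasis[OF F eig]])
  then have eig_sqrt: "image_mset (\<lambda>z. sqrt (Re z)) (eig_mset (cadjoint Z ** Z)) = mset xs"
    by (simp add: xs_def multiset.map_comp comp_def mset_upt atLeast0LessThan)
  have "sort xs = rev xs"
    using sorted by (intro properties_for_sort) (simp_all add: xs_def sorted_rev_iff_nth_mono)
  then show ?thesis
    unfolding singvals_def eig_sqrt sorted_list_of_multiset_mset by (simp add: xs_def take_map)
qed

text \<open>The right singular vectors \<open>F\<close> are an eigenbasis of \<open>Z\<^sup>* Z\<close> with eigenvalues \<open>\<sigma>\<^sup>2\<close>.\<close>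
lemma singular_value_decomposition:
  fixes Z :: "complex^'n^'m"
  obtains F \<sigma> where "orthonormal CARD('n) F"
    "\<forall>a<CARD('n). \<sigma> a = norm (Z *v F a)"
    "\<forall>a b. a \<le> b \<longrightarrow> b < CARD('n) \<longrightarrow> \<sigma> b \<le> \<sigma> a"
    "\<forall>a<CARD('n). \<forall>b<CARD('n). a \<noteq> b \<longrightarrow> cinner (Z *v F a) (Z *v F b) = 0"
    "singvals Z = map \<sigma> [0..<min CARD('m) CARD('n)]"
proof -
  let ?n = "CARD('n)"
  have "cadjoint (cadjoint Z ** Z) = cadjoint Z ** Z"
    by (simp add: cadjoint_matrix_mult)
  then obtain F lam where F: "orthonormal ?n F"
    and eig: "\<forall>a<?n. (cadjoint Z ** Z) *v F a = of_real (lam a) *s F a"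
    and sorted: "\<forall>a b. a \<le> b \<longrightarrow> b < ?n \<longrightarrow> lam b \<le> lam a"
    by (rule hermitian_sorted_eigenbasis)
  have ZF: "cinner (Z *v F a) (Z *v F b) = of_real (lam b) * (if a = b then 1 else 0)"
    if "a < ?n" "b < ?n" for a b
  proof -
    have "cinner (Z *v F a) (Z *v F b) = cinner (F a) ((cadjoint Z ** Z) *v F b)"
      using cinner_matrix_vector_mult[of "F a" "cadjoint Z" "Z *v F b"]
      by (simp add: matrix_vector_mul_assoc)
    then show ?thesis
      using eig that F by (simp add: cinner_scale_right orthonormal_def)
  qed
  have \<sigma>: "\<forall>a<?n. sqrt (lam a) = norm (Z *v F a)"
  proof (intro allI impI)
    fix a assume a: "a < ?n"
    have "of_real ((norm (Z *v F a))\<^sup>2) = (of_real (lam a) :: complex)"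
      using ZF[OF a a] by (simp only: cinner_self[symmetric]) simp
    then have "(norm (Z *v F a))\<^sup>2 = lam a"
      by (simp only: of_real_eq_iff)
    then show "sqrt (lam a) = norm (Z *v F a)"
      using real_sqrt_abs[of "norm (Z *v F a)"] by simp
  qed
  have "\<forall>a b. a \<le> b \<longrightarrow> b < ?n \<longrightarrow> sqrt (lam b) \<le> sqrt (lam a)"
    using sorted by simp
  moreover have "\<forall>a<?n. \<forall>b<?n. a \<noteq> b \<longrightarrow> cinner (Z *v F a) (Z *v F b) = 0"
    using ZF by simp
  ultimately show ?thesis
    by (rule that[OF F \<sigma> _ _ singvals_eq_sqrt_eigenvalues[OF F eig sorted]])
qed

lemma left_singular_family:
  fixes Z :: "complex^'n^'m"
  assumes F: "orthonormal CARD('n) F" and \<sigma>: "\<forall>a<CARD('n). \<sigma> a = norm (Z *v F a)"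
    and orth: "\<forall>a<CARD('n). \<forall>b<CARD('n). a \<noteq> b \<longrightarrow> cinner (Z *v F a) (Z *v F b) = 0"
  defines "x \<equiv> \<lambda>i. (1 / \<sigma> i) *\<^sub>R (Z *v F i)"
  shows "suborthonormal CARD('n) x"
    and "\<And>w. Z *v w = (\<Sum>i<CARD('n). (cinner (F i) w * of_real (\<sigma> i)) *s x i)"
proof -
  have ZF: "Z *v F i = \<sigma> i *\<^sub>R x i" if "i < CARD('n)" for i
    using \<sigma> that by (cases "\<sigma> i = 0") (auto simp: x_def)
  show "suborthonormal CARD('n) x"
    unfolding suborthonormal_def
  proof (intro conjI allI impI)
    fix a b assume "a < CARD('n)" "b < CARD('n)" "a \<noteq> b"
    then show "cinner (x a) (x b) = 0"
      using orth by (simp add: x_def cinner_scaleR_left cinner_scaleR_right)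
  next
    fix a assume "a < CARD('n)"
    then show "norm (x a) \<le> 1"
      using \<sigma> by (cases "\<sigma> a = 0") (auto simp: x_def)
  qed
  show "Z *v w = (\<Sum>i<CARD('n). (cinner (F i) w * of_real (\<sigma> i)) *s x i)" for w
  proof -
    have "Z *v w = Z *v (\<Sum>i<CARD('n). cinner (F i) w *s F i)"
      using orthonormal_expansion[OF F, of w] by simp
    also have "\<dots> = (\<Sum>i<CARD('n). cinner (F i) w *s (Z *v F i))"
      by (simp add: vec.sum vector_scalar_commute)
    also have "\<dots> = (\<Sum>i<CARD('n). (cinner (F i) w * of_real (\<sigma> i)) *s x i)"
      by (rule sum.cong) (auto simp: ZF vec_eq_iff scaleR_conv_of_real[where 'a=complex] mult_ac)
    finally show ?thesis .
  qed
qed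

lemma length_singvals: "length (singvals (X :: complex^'n^'m)) = min CARD('m) CARD('n)"
proof -
  obtain F :: "nat \<Rightarrow> complex^'n" and \<sigma> where "singvals X = map \<sigma> [0..<min CARD('m) CARD('n)]"
    by (rule singular_value_decomposition)
  then show ?thesis
    by simp
qed

lemma sorted_rev_singvals: "sorted (rev (singvals (X :: complex^'n^'m)))"
proof -
  obtain F :: "nat \<Rightarrow> complex^'n" and \<sigma> where "\<forall>a b. a \<le> b \<longrightarrow> b < CARD('n) \<longrightarrow> \<sigma> b \<le> \<sigma> a"
    and "singvals X = map \<sigma> [0..<min CARD('m) CARD('n)]"
    by (rule singular_value_decomposition)
  then show ?thesis
    unfolding sorted_rev_iff_nth_mono by simp
qed

section \<open>Ky Fan norms\<close>

definition ky_fan :: "nat \<Rightarrow> complex^'n^'m \<Rightarrow> real" where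
  "ky_fan r X = sum_list (take r (singvals X))"

lemma sum_list_take_map_upt: "r \<le> p \<Longrightarrow> sum_list (take r (map f [0..<p])) = (\<Sum>a<r. f a)"
  by (simp add: take_map interv_sum_list_conv_sum_set_nat atLeast0LessThan min_def)

lemma ky_fan_eq_sum:
  assumes "r \<le> min CARD('m) CARD('n)"
  shows "ky_fan r (X :: complex^'n^'m) = (\<Sum>k<r. singvals X ! k)"
proof -
  have "ky_fan r X = sum_list (take r (map (\<lambda>k. singvals X ! k) [0..<length (singvals X)]))"
    by (simp add: ky_fan_def map_nth)
  then show ?thesis
    using assms by (simp add: sum_list_take_map_upt length_singvals)
qed

lemma weighted_sum_le_sum_largest:
  fixes \<sigma> c :: "nat \<Rightarrow> real"
  assumes r: "r \<le> n"
    and antimono: "\<And>a b. a \<le> b \<Longrightarrow> b < n \<Longrightarrow> \<sigma> b \<le> \<sigma> a"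
    and nonneg: "\<And>a. a < n \<Longrightarrow> 0 \<le> \<sigma> a"
    and c: "\<And>a. a < n \<Longrightarrow> 0 \<le> c a \<and> c a \<le> 1"
    and c_sum: "(\<Sum>a<n. c a) \<le> r"
  shows "(\<Sum>a<n. \<sigma> a * c a) \<le> (\<Sum>a<r. \<sigma> a)"
proof -
  define s where "s = (if r < n then \<sigma> r else 0)"
  define e where "e a = (if a < r then 1 else (0::real))" for a
  have "\<sigma> a * c a - \<sigma> a * e a \<le> s * (c a - e a)" if a: "a < n" for a
    \<comment> \<open>\<open>(\<sigma> a - s) (c a - e a) \<le> 0\<close>: where \<open>e a = 1\<close>, \<open>\<sigma> a \<ge> s\<close> and \<open>c a \<le> 1\<close>;
      elsewhere \<open>\<sigma> a \<le> s\<close> and \<open>c a \<ge> 0\<close>\<close>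
  proof (cases "a < r")
    case True
    then have "\<sigma> a * (c a - 1) \<le> s * (c a - 1)"
      using antimono nonneg c a by (intro mult_right_mono_neg) (auto simp: s_def)
    then show ?thesis
      using True by (simp add: e_def algebra_simps)
  next
    case False
    then have "\<sigma> a \<le> s"
      using antimono a by (auto simp: s_def)
    then show ?thesis
      using False c a by (simp add: e_def mult_right_mono)
  qed
  then have "(\<Sum>a<n. \<sigma> a * c a - \<sigma> a * e a) \<le> (\<Sum>a<n. s * (c a - e a))"
    by (intro sum_mono) auto
  also have "\<dots> = s * ((\<Sum>a<n. c a) - (\<Sum>a<n. e a))"
    by (simp add: right_diff_distrib sum_subtractf sum_distrib_left)
  also have "(\<Sum>a<n. e a) = (\<Sum>a<r. 1)"
    using r by (intro sum.mono_neutral_cong_right) (auto simp: e_def)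
  also have "s * ((\<Sum>a<n. c a) - (\<Sum>a<r. 1)) \<le> 0"
    using c_sum nonneg by (simp add: s_def mult_nonneg_nonpos)
  finally have "(\<Sum>a<n. \<sigma> a * c a) \<le> (\<Sum>a<n. \<sigma> a * e a)"
    by (simp add: sum_subtractf)
  also have "\<dots> = (\<Sum>a<r. \<sigma> a)"
    using r by (intro sum.mono_neutral_cong_right) (auto simp: e_def)
  finally show ?thesis .
qed

lemma sum_mult_le_1_if_sum_squares_le_1:
  fixes A B :: "'a \<Rightarrow> real"
  assumes "(\<Sum>j\<in>J. (A j)\<^sup>2) \<le> 1" "(\<Sum>j\<in>J. (B j)\<^sup>2) \<le> 1"
  shows "(\<Sum>j\<in>J. A j * B j) \<le> 1"
proof -
  have "(\<Sum>j\<in>J. A j * B j) \<le> (\<Sum>j\<in>J. ((A j)\<^sup>2 + (B j)\<^sup>2) / 2)"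
    using sum_squares_bound by (intro sum_mono) (simp add: field_simps)
  also have "\<dots> = ((\<Sum>j\<in>J. (A j)\<^sup>2) + (\<Sum>j\<in>J. (B j)\<^sup>2)) / 2"
    by (simp add: sum.distrib sum_divide_distrib[symmetric])
  finally show ?thesis
    using assms by simp
qed

lemma bessel_cinner_product_le_1:
  assumes P: "suborthonormal k P" and Q: "suborthonormal k Q" and "norm a \<le> 1" "norm b \<le> 1"
  shows "(\<Sum>j<k. cmod (cinner (P j) a) * cmod (cinner (Q j) b)) \<le> 1"
proof (rule sum_mult_le_1_if_sum_squares_le_1)
  show "(\<Sum>j<k. (cmod (cinner (P j) a))\<^sup>2) \<le> 1"
    using bessel_inequality[OF P, of a] power_le_one[OF norm_ge_zero \<open>norm a \<le> 1\<close>, where n=2] by linarith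
  show "(\<Sum>j<k. (cmod (cinner (Q j) b))\<^sup>2) \<le> 1"
    using bessel_inequality[OF Q, of b] power_le_one[OF norm_ge_zero \<open>norm b \<le> 1\<close>, where n=2] by linarith
qed

text \<open>Expanding \<open>Z\<close> in its singular value decomposition turns the left-hand side into
  \<open>\<Sum>\<^sub>i \<sigma>\<^sub>i c\<^sub>i\<close>, where Bessel's inequality, applied along both indices, gives
  \<open>0 \<le> c\<^sub>i \<le> 1\<close> and \<open>\<Sum>\<^sub>i c\<^sub>i \<le> r\<close>.\<close>
lemma ky_fan_upper:
  fixes Z :: "complex^'n^'m"
  assumes u: "suborthonormal r u" and v: "suborthonormal r v" and r: "r \<le> min CARD('m) CARD('n)"
  shows "Re (\<Sum>j<r. cinner (u j) (Z *v v j)) \<le> ky_fan r Z"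
proof -
  let ?n = "CARD('n)"
  obtain F \<sigma> where F: "orthonormal ?n F" and \<sigma>: "\<forall>a<?n. \<sigma> a = norm (Z *v F a)"
    and antimono: "\<forall>a b. a \<le> b \<longrightarrow> b < ?n \<longrightarrow> \<sigma> b \<le> \<sigma> a"
    and orth: "\<forall>a<?n. \<forall>b<?n. a \<noteq> b \<longrightarrow> cinner (Z *v F a) (Z *v F b) = 0"
    and sv: "singvals Z = map \<sigma> [0..<min CARD('m) ?n]"
    by (rule singular_value_decomposition)
  define x where "x = (\<lambda>i. (1 / \<sigma> i) *\<^sub>R (Z *v F i))"
  have x: "suborthonormal ?n x" and Z: "\<And>w. Z *v w = (\<Sum>i<?n. (cinner (F i) w * of_real (\<sigma> i)) *s x i)"
    using left_singular_family[OF F \<sigma> orth] unfolding x_def by blast+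
  define A where "A i j = cmod (cinner (F i) (v j))" for i j
  define B where "B i j = cmod (cinner (u j) (x i))" for i j
  have "Re (\<Sum>j<r. cinner (u j) (Z *v v j))
      = (\<Sum>j<r. \<Sum>i<?n. Re (cinner (F i) (v j) * of_real (\<sigma> i) * cinner (u j) (x i)))"
    by (subst Z) (simp add: cinner_sum_right cinner_scale_right Re_sum)
  also have "\<dots> \<le> (\<Sum>j<r. \<Sum>i<?n. \<sigma> i * (A i j * B i j))"
    using \<sigma> by (intro sum_mono order_trans[OF complex_Re_le_cmod]) (simp add: A_def B_def norm_mult)
  also have "\<dots> = (\<Sum>i<?n. \<sigma> i * (\<Sum>j<r. A i j * B i j))"
    by (subst sum.swap) (simp add: sum_distrib_left)
  also have "\<dots> \<le> (\<Sum>a<r. \<sigma> a)"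
  proof (rule weighted_sum_le_sum_largest)
    show "0 \<le> (\<Sum>j<r. A i j * B i j) \<and> (\<Sum>j<r. A i j * B i j) \<le> 1" if "i < ?n" for i
      using bessel_cinner_product_le_1[OF v u, of "F i" "x i"] orthonormal_norm[OF F that] x that
      by (auto simp: A_def B_def cinner_commute[of "F i"] sum_nonneg suborthonormal_def)
    have "(\<Sum>i<?n. A i j * B i j) \<le> 1" if "j < r" for j
      using bessel_cinner_product_le_1[OF orthonormal_imp_suborthonormal[OF F] x, of "v j" "u j"] u v that
      by (auto simp: A_def B_def cinner_commute[of "u j"] suborthonormal_def)
    then have "(\<Sum>j<r. \<Sum>i<?n. A i j * B i j) \<le> (\<Sum>j<r. 1)"
      by (intro sum_mono) auto
    then show "(\<Sum>i<?n. \<Sum>j<r. A i j * B i j) \<le> r"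
      by (subst sum.swap) simp
  qed (use r antimono \<sigma> in auto)
  also have "\<dots> = ky_fan r Z"
    using r by (simp add: ky_fan_def sv sum_list_take_map_upt)
  finally show ?thesis .
qed

lemma ky_fan_attained:
  fixes Z :: "complex^'n^'m"
  assumes r: "r \<le> min CARD('m) CARD('n)"
  obtains u v where "suborthonormal r u" "suborthonormal r v"
    "Re (\<Sum>j<r. cinner (u j) (Z *v v j)) = ky_fan r Z"
proof -
  let ?n = "CARD('n)"
  obtain F \<sigma> where F: "orthonormal ?n F" and \<sigma>: "\<forall>a<?n. \<sigma> a = norm (Z *v F a)"
    and orth: "\<forall>a<?n. \<forall>b<?n. a \<noteq> b \<longrightarrow> cinner (Z *v F a) (Z *v F b) = 0"
    and sv: "singvals Z = map \<sigma> [0..<min CARD('m) ?n]"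
    by (rule singular_value_decomposition)
  define x where "x = (\<lambda>i. (1 / \<sigma> i) *\<^sub>R (Z *v F i))"
  have x: "suborthonormal ?n x"
    using left_singular_family[OF F \<sigma> orth] unfolding x_def by blast
  have "Re (cinner (x j) (Z *v F j)) = \<sigma> j" if "j < r" for j
    using \<sigma> that r by (simp add: x_def cinner_scaleR_left cinner_self power2_eq_square)
  then have "Re (\<Sum>j<r. cinner (x j) (Z *v F j)) = ky_fan r Z"
    using r by (simp add: Re_sum ky_fan_def sv sum_list_take_map_upt)
  moreover have "suborthonormal r x" "suborthonormal r F"
    using r suborthonormal_mono[OF x] suborthonormal_mono[OF orthonormal_imp_suborthonormal[OF F]]
    by auto
  ultimately show ?thesis
    using that by blast
qed

lemma ky_fan_triangle:
  fixes A B :: "complex^'n^'m"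
  assumes r: "r \<le> min CARD('m) CARD('n)"
  shows "ky_fan r A \<le> ky_fan r B + ky_fan r (A - B)"
proof -
  obtain u v where u: "suborthonormal r u" and v: "suborthonormal r v"
    and A: "Re (\<Sum>j<r. cinner (u j) (A *v v j)) = ky_fan r A"
    using ky_fan_attained[OF r] by blast
  have "ky_fan r A = Re (\<Sum>j<r. cinner (u j) (B *v v j)) + Re (\<Sum>j<r. cinner (u j) ((A - B) *v v j))"
    by (simp add: A[symmetric] matrix_vector_mult_diff_rdistrib cinner_diff_right sum_subtractf)
  also have "\<dots> \<le> ky_fan r B + ky_fan r (A - B)"
    by (intro add_mono ky_fan_upper[OF u v r])
  finally show ?thesis .
qed

lemma ky_fan_le_norm:
  fixes X :: "complex^'n^'m"
  assumes r: "r \<le> min CARD('m) CARD('n)"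
  shows "ky_fan r X \<le> r * norm X"
proof -
  obtain u v where u: "suborthonormal r u" and v: "suborthonormal r v"
    and X: "Re (\<Sum>j<r. cinner (u j) (X *v v j)) = ky_fan r X"
    using ky_fan_attained[OF r] by blast
  have "ky_fan r X \<le> (\<Sum>j<r. cmod (cinner (u j) (X *v v j)))"
    unfolding X[symmetric] by (simp add: Re_sum sum_mono complex_Re_le_cmod)
  also have "\<dots> \<le> (\<Sum>j<r. norm X)"
  proof (rule sum_mono)
    fix j assume "j \<in> {..<r}"
    then have u1: "norm (u j) \<le> 1" and v1: "norm (v j) \<le> 1"
      using u v by (auto simp: suborthonormal_def)
    have "cmod (cinner (u j) (X *v v j)) \<le> norm (u j) * norm (X *v v j)"
      by (rule norm_cinner_le)
    also have "\<dots> \<le> 1 * (norm X * norm (v j))"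
      using u1 by (intro mult_mono norm_matrix_vector_mult_le) auto
    also have "\<dots> \<le> norm X"
      using v1 by (simp add: mult_left_le)
    finally show "cmod (cinner (u j) (X *v v j)) \<le> norm X" .
  qed
  finally show ?thesis
    by simp
qed

lemma continuous_on_ky_fan:
  assumes "r \<le> min CARD('m) CARD('n)"
  shows "continuous_on S (ky_fan r :: complex^'n^'m \<Rightarrow> real)"
proof (rule lipschitz_on_continuous_on)
  show "(real r)-lipschitz_on S (ky_fan r)"
  proof (rule lipschitz_onI)
    fix A B :: "complex^'n^'m"
    show "dist (ky_fan r A) (ky_fan r B) \<le> real r * dist A B"
      using ky_fan_triangle[OF assms, of A B] ky_fan_le_norm[OF assms, of "A - B"]
        ky_fan_triangle[OF assms, of B A] ky_fan_le_norm[OF assms, of "B - A"]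
      unfolding dist_real_def dist_norm abs_le_iff norm_minus_commute[of B A] by linarith
  qed simp
qed

lemma continuous_on_singvals_nth:
  assumes "k < min CARD('m) CARD('n)"
  shows "continuous_on S (\<lambda>X::complex^'n^'m. singvals X ! k)"
proof -
  have "continuous_on S (\<lambda>X::complex^'n^'m. ky_fan (Suc k) X - ky_fan k X)"
    using assms by (intro continuous_on_diff continuous_on_ky_fan) auto
  moreover have "ky_fan (Suc k) X - ky_fan k X = singvals X ! k" for X :: "complex^'n^'m"
    using assms by (simp add: ky_fan_eq_sum)
  ultimately show ?thesis
    by simp
qed

lemma bounded_linear_Re_sum_cinner:
  "bounded_linear (\<lambda>X::complex^'n^'m. Re (\<Sum>j<r. cinner (u j) (X *v v j)))"
proof -
  have "linear (\<lambda>X::complex^'n^'m. Re (\<Sum>j<r. cinner (u j) (X *v v j)))"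
  proof (rule linearI)
    fix A B :: "complex^'n^'m"
    show "Re (\<Sum>j<r. cinner (u j) ((A + B) *v v j))
        = Re (\<Sum>j<r. cinner (u j) (A *v v j)) + Re (\<Sum>j<r. cinner (u j) (B *v v j))"
      by (simp add: matrix_vector_mult_add_rdistrib cinner_add_right sum.distrib)
  next
    fix c :: real and A :: "complex^'n^'m"
    show "Re (\<Sum>j<r. cinner (u j) ((c *\<^sub>R A) *v v j)) = c *\<^sub>R Re (\<Sum>j<r. cinner (u j) (A *v v j))"
      by (simp add: scaleR_matrix_vector_mult_complex cinner_scaleR_right Re_sum sum_distrib_left)
  qed
  then show ?thesis
    by (simp add: linear_conv_bounded_linear)
qed

text \<open>Ky Fan's maximum principle writes \<open>ky_fan r A\<close> as a linear functional of \<open>A\<close> that is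
  dominated by \<open>ky_fan r\<close> everywhere; integrate that functional.\<close>
lemma ky_fan_has_integral_le:
  fixes g :: "'a::euclidean_space \<Rightarrow> complex^'n^'m"
  assumes g: "(g has_integral A) S" and int: "(\<lambda>t. ky_fan r (g t)) integrable_on S"
    and r: "r \<le> min CARD('m) CARD('n)"
  shows "ky_fan r A \<le> integral S (\<lambda>t. ky_fan r (g t))"
proof -
  obtain u v where u: "suborthonormal r u" and v: "suborthonormal r v"
    and A: "Re (\<Sum>j<r. cinner (u j) (A *v v j)) = ky_fan r A"
    using ky_fan_attained[OF r] by blast
  define L where "L = (\<lambda>X::complex^'n^'m. Re (\<Sum>j<r. cinner (u j) (X *v v j)))"
  have "bounded_linear L"
    unfolding L_def by (rule bounded_linear_Re_sum_cinner)
  then have "((L \<circ> g) has_integral L A) S"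
    by (rule has_integral_linear[OF g])
  moreover have "L (g t) \<le> ky_fan r (g t)" for t
    unfolding L_def by (rule ky_fan_upper[OF u v r])
  ultimately have "L A \<le> integral S (\<lambda>t. ky_fan r (g t))"
    using int by (intro has_integral_le[OF _ integrable_integral]) auto
  then show ?thesis
    using A by (simp add: L_def)
qed

lemma sum_take_singvals_has_integral_le:
  fixes g :: "'a::euclidean_space \<Rightarrow> complex^'n^'m"
  assumes g: "(g has_integral A) S"
    and int: "\<And>k. k < r \<Longrightarrow> (\<lambda>t. singvals (g t) ! k) integrable_on S"
    and r: "r \<le> min CARD('m) CARD('n)"
  shows "sum_list (take r (singvals A)) \<le> (\<Sum>k<r. integral S (\<lambda>t. singvals (g t) ! k))"
proof -
  have "sum_list (take r (singvals A)) \<le> integral S (\<lambda>t. ky_fan r (g t))"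
    unfolding ky_fan_def[symmetric] using int r
    by (intro ky_fan_has_integral_le[OF g]) (auto simp: ky_fan_eq_sum[OF r] intro!: integrable_sum)
  also have "\<dots> = (\<Sum>k<r. integral S (\<lambda>t. singvals (g t) ! k))"
    using int by (simp only: ky_fan_eq_sum[OF r]) (intro integral_sum, auto)
  finally show ?thesis .
qed

section \<open>Weak majorization\<close>

lemma weak_majorizedI_sorted:
  assumes "length x = length y" "sorted (rev x)" "sorted (rev y)"
    and "\<And>r. r \<le> length x \<Longrightarrow> sum_list (take r x) \<le> sum_list (take r y)"
  shows "x \<prec>\<^sub>w y"
proof -
  have "rev (sort xs) = xs" if "sorted (rev xs)" for xs :: "real list"
    using properties_for_sort[of "rev xs" xs] that by simp
  then show ?thesis
    using assms by (simp add: weak_majorized_def)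
qed

lemma sorted_rev_map_integral:
  assumes "\<And>k. k < p \<Longrightarrow> f k integrable_on S"
    and "\<And>i j t. i \<le> j \<Longrightarrow> j < p \<Longrightarrow> f j t \<le> (f i t :: real)"
  shows "sorted (rev (map (\<lambda>k. integral S (f k)) [0..<p]))"
  unfolding sorted_rev_iff_nth_mono using assms by (auto intro!: integral_le)

lemma smooth_on_01_derivative_continuous:
  fixes \<gamma> \<gamma>' :: "real \<Rightarrow> 'a::real_normed_vector"
  assumes "smooth_on_01 \<gamma>"
    and \<gamma>': "\<And>t. t \<in> {0..1} \<Longrightarrow> (\<gamma> has_vector_derivative \<gamma>' t) (at t within {0..1})"
  shows "continuous_on {0..1} \<gamma>'"
proof -
  obtain f where f0: "f 0 = \<gamma>"
    and f: "\<forall>k. \<forall>t\<in>{0..1}. (f k has_vector_derivative f (Suc k) t) (at t within {0..1::real})"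
    using assms(1) unfolding smooth_on_01_def by blast
  have "\<gamma>' t = f 1 t" if "t \<in> {0..1}" for t
    using vector_derivative_unique_within[OF _ \<gamma>'[OF that]] f f0 that
    by (force simp: trivial_limit_within islimpt_Icc)
  moreover have "continuous_on {0..1} (f 1)"
    using f by (auto simp: continuous_on_eq_continuous_within
        intro!: differentiable_imp_continuous_within differentiableI_vector)
  ultimately show ?thesis
    by (metis continuous_on_cong)
qed

theorem proposition4p1:
  fixes \<gamma> \<gamma>' :: "real \<Rightarrow> complex^'n^'m" and C D :: "complex^'n^'m"
  assumes "smooth_on_01 \<gamma>"
    and "\<And>t. t \<in> {0..1} \<Longrightarrow> (\<gamma> has_vector_derivative \<gamma>' t) (at t within {0..1})"
    and "\<gamma> 0 = C" and "\<gamma> 1 = D"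
  shows "singvals (D - C) \<prec>\<^sub>w
    map (\<lambda>k. integral {0..1} (\<lambda>t. singvals (\<gamma>' t) ! k)) [0..<min CARD('m) CARD('n)]"
proof (rule weak_majorizedI_sorted)
  let ?p = "min CARD('m) CARD('n)"
  have "continuous_on {0..1} \<gamma>'"
    using smooth_on_01_derivative_continuous assms(1,2) .
  then have int: "(\<lambda>t. singvals (\<gamma>' t) ! k) integrable_on {0..1}" if "k < ?p" for k
    using that by (intro integrable_continuous_real continuous_on_compose2[OF continuous_on_singvals_nth]) auto
  show "sorted (rev (map (\<lambda>k. integral {0..1} (\<lambda>t. singvals (\<gamma>' t) ! k)) [0..<?p]))"
    using int sorted_rev_nth_mono[OF sorted_rev_singvals]
    by (intro sorted_rev_map_integral) (auto simp: length_singvals)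
  fix r assume "r \<le> length (singvals (D - C))"
  then have r: "r \<le> ?p"
    by (simp add: length_singvals)
  have "(\<gamma>' has_integral D - C) {0..1}"
    using fundamental_theorem_of_calculus[of 0 1 \<gamma> \<gamma>'] assms by simp
  then show "sum_list (take r (singvals (D - C)))
      \<le> sum_list (take r (map (\<lambda>k. integral {0..1} (\<lambda>t. singvals (\<gamma>' t) ! k)) [0..<?p]))"
    unfolding sum_list_take_map_upt[OF r] using int r by (intro sum_take_singvals_has_integral_le) auto
qed (simp_all add: length_singvals sorted_rev_singvals)

end
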